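(* Let $\xi=(\xi(x))_{x\in\mathbb{Z}}$ be i.i.d. random variables with values in $(-\infty,0]$. Fix $\eta\in(0,1)$ and let $\widetilde G_\eta\colon(0,\infty)\to(0,\infty)$ be a function such that (ii) $\ell\mapsto1/\widetilde G_\eta(\ell)$ is increasing and concave for all sufficiently large $\ell$, and (iii) the random variable $1/\widetilde G_\eta(\log(-\xi(0)\vee1))$ has finite first moment. Then there exists $\varrho\in(0,\infty)$ such that \[ \limsup_{n\to\infty}\frac{1}{\widetilde G_\eta^{-1}(\varrho/n)}\sum_{x=1}^n\log\bigl(-\xi(x)\vee1\bigr)\le1\qquad\text{Prob-almost surely.} \]
   Context: Prob denotes the law of $\xi$. $\widetilde G_\eta^{-1}$ denotes the inverse function of $\widetilde G_\eta$ restricted to a half-line $[x_0,\infty)$ on which $1/\widetilde G_\eta$ is increasing and concave. *)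

theory Defs
  imports "HOL-Probability.Probability"
begin

end

theory Submission
  imports Defs
begin

(*
  Write f = 1 / G and Y x = log (-\<xi> x \<or> 1) \<ge> 0. Since f is concave on [x0, \<infinity>), its increments
  decrease, so f (x0 + Y 1 + ... + Y n) \<le> f (x0 + Y 1) + ... + f (x0 + Y n) as soon as f x0 \<ge> 0.
  The summands on the right are i.i.d., nonnegative and integrable by the moment condition, so a
  crude strong law bounds their sum by c n almost surely for all large n. With \<rho> = 1 / c this
  reads f (x0 + Y 1 + ... + Y n) \<le> n / \<rho> = f (G^-1 (\<rho> / n)), and since f is increasing,
  Y 1 + ... + Y n \<le> G^-1 (\<rho> / n).
*)

section \<open>Concave functions\<close>

lemma concave_on_increment_antimono:
  fixes f :: "real \<Rightarrow> real"
  assumes conc: "concave_on {a..} f" and "a \<le> u" "u \<le> v" "0 \<le> d"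
  shows "f (v + d) - f v \<le> f (u + d) - f u"
proof (cases "d = 0 \<or> u = v")
  case False
  with assms have "0 < v - u + d" by auto
  \<comment> \<open>u + d and v are the points of [u, v + d] with weights t and 1 - t on v + d.\<close>
  define t where "t = d / (v - u + d)"
  have t: "0 \<le> t" "t \<le> 1" "t * (v - u + d) = d"
    using \<open>0 < v - u + d\<close> assms by (auto simp: t_def field_simps)
  have "(1 - t) * u + t * (v + d) = u + d" and "t * u + (1 - t) * (v + d) = v"
    using t(3) by (simp_all add: algebra_simps)
  moreover have "(1 - t) * f u + t * f (v + d) \<le> f ((1 - t) *\<^sub>R u + t *\<^sub>R (v + d))"
    and "(1 - (1 - t)) * f u + (1 - t) * f (v + d) \<le> f ((1 - (1 - t)) *\<^sub>R u + (1 - t) *\<^sub>R (v + d))"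
    using t assms by (intro concave_onD[OF conc]; simp)+
  ultimately show ?thesis by (simp add: algebra_simps)
qed auto

lemma concave_on_shifted_sum_le:
  fixes f :: "real \<Rightarrow> real" and y :: "'i \<Rightarrow> real"
  assumes conc: "concave_on {a..} f" and "0 \<le> f a"
    and "finite I" "I \<noteq> {}" and y: "\<And>i. i \<in> I \<Longrightarrow> 0 \<le> y i"
  shows "f (a + (\<Sum>i\<in>I. y i)) \<le> (\<Sum>i\<in>I. f (a + y i))"
  using \<open>finite I\<close> \<open>I \<noteq> {}\<close> y
proof (induction I rule: finite_ne_induct)
  case (insert i I)
  have "f (a + (\<Sum>i\<in>I. y i) + y i) - f (a + (\<Sum>i\<in>I. y i)) \<le> f (a + y i) - f a"
    using insert.prems by (intro concave_on_increment_antimono[OF conc]) (auto intro: sum_nonneg)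
  with insert \<open>0 \<le> f a\<close> show ?case by (simp add: algebra_simps)
qed simp

lemma shifted_sum_le_if_concave_sum_le:
  fixes f :: "real \<Rightarrow> real" and y :: "'i \<Rightarrow> real"
  assumes conc: "concave_on {a..} f" and mono: "strict_mono_on {a..} f" and "0 \<le> f a"
    and "finite I" and y: "\<And>i. i \<in> I \<Longrightarrow> 0 \<le> y i"
    and le: "(\<Sum>i\<in>I. f (a + y i)) \<le> f b" and "a \<le> b"
  shows "a + (\<Sum>i\<in>I. y i) \<le> b"
proof (cases "I = {}")
  case False
  show ?thesis
  proof (rule ccontr)
    assume "\<not> a + (\<Sum>i\<in>I. y i) \<le> b"
    then have "f b < f (a + (\<Sum>i\<in>I. y i))"
      using \<open>a \<le> b\<close> by (intro strict_mono_onD[OF mono]) auto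
    also have "\<dots> \<le> (\<Sum>i\<in>I. f (a + y i))"
      using assms False by (intro concave_on_shifted_sum_le[OF conc])
    finally show False
      using le by simp
  qed
qed (use \<open>a \<le> b\<close> in simp)

lemma concave_on_shift_le:
  fixes f :: "real \<Rightarrow> real"
  assumes conc: "concave_on {a..} f" and mono: "mono_on {a..} f" and "0 \<le> f a" "0 \<le> a" "0 \<le> y"
  shows "f (a + y) \<le> f (a + a) + \<bar>f y\<bar>"
proof (cases "y \<le> a")
  case True
  then have "f (a + y) \<le> f (a + a)"
    using assms by (intro mono_onD[OF mono]) auto
  then show ?thesis by linarith
next
  case False
  then have "f (y + a) - f y \<le> f (a + a) - f a"
    using assms by (intro concave_on_increment_antimono[OF conc]) auto
  with \<open>0 \<le> f a\<close> show ?thesis by (simp add: add.commute)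
qed

lemma concave_on_continuous_on_greaterThan:
  fixes f :: "real \<Rightarrow> real"
  assumes "concave_on {a..} f"
  shows "continuous_on {a<..} f"
proof -
  have "convex_on {a<..} (\<lambda>l. - f l)"
    using assms unfolding concave_on_def by (rule convex_on_subset) auto
  then have "continuous_on {a<..} (\<lambda>l. - (- f l))"
    by (intro continuous_on_minus convex_on_continuous) auto
  then show ?thesis by simp
qed

lemma Ioc_subset_image_if_reciprocal_concave:
  fixes G :: "real \<Rightarrow> real"
  assumes pos: "\<And>l. a \<le> l \<Longrightarrow> 0 < G l" and conc: "concave_on {a..} (\<lambda>l. 1 / G l)"
    and lim: "(G \<longlongrightarrow> 0) at_top" and "a < b"
  shows "{0<..G b} \<subseteq> G ` {b..}"
proof
  fix c assume c: "c \<in> {0<..G b}"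
  obtain l where l: "b \<le> l" "G l < c"
  proof -
    from c obtain N where "\<And>l. N \<le> l \<Longrightarrow> G l < c"
      using order_tendstoD(2)[OF lim, of c] by (auto simp: eventually_at_top_linorder)
    then show thesis using that[of "max b N"] by simp
  qed
  have "continuous_on {b..l} (\<lambda>l. 1 / G l)"
    using \<open>a < b\<close> by (intro continuous_on_subset[OF concave_on_continuous_on_greaterThan[OF conc]]) auto
  moreover have "1 / G b \<le> 1 / c" "1 / c \<le> 1 / G l"
    using c l pos[of b] pos[of l] \<open>a < b\<close> by (auto intro!: divide_left_mono)
  ultimately obtain L where "b \<le> L" "L \<le> l" "1 / G L = 1 / c"
    using IVT'[of "\<lambda>l. 1 / G l" b "1 / c" l] l by auto
  then show "c \<in> G ` {b..}" by auto
qed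

lemma eventually_the_inv_into_reciprocal:
  fixes G :: "real \<Rightarrow> real"
  assumes pos: "\<And>l. a \<le> l \<Longrightarrow> 0 < G l" and incr: "strict_mono_on {a..} (\<lambda>l. 1 / G l)"
    and conc: "concave_on {a..} (\<lambda>l. 1 / G l)" and lim: "(G \<longlongrightarrow> 0) at_top" and "0 < \<rho>"
  shows "\<forall>\<^sub>F n in sequentially. a \<le> the_inv_into {a..} G (\<rho> / real n)
    \<and> 1 / G (the_inv_into {a..} G (\<rho> / real n)) = real n / \<rho>"
proof -
  have inj: "inj_on G {a..}"
    using strict_mono_on_eqD[OF incr] by (intro inj_onI) auto
  have attained: "{0<..G (a + 1)} \<subseteq> G ` {a..}"
    using Ioc_subset_image_if_reciprocal_concave[OF pos conc lim, of "a + 1"] by auto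
  have "\<forall>\<^sub>F n in sequentially. \<rho> / real n < G (a + 1)"
    using pos[of "a + 1"] by (intro order_tendstoD(2)[OF lim_const_over_n]) simp
  then have "\<forall>\<^sub>F n in sequentially. \<rho> / real n \<in> {0<..G (a + 1)}"
    using eventually_gt_at_top[of "0::nat"] by eventually_elim (use \<open>0 < \<rho>\<close> in auto)
  then show ?thesis
  proof eventually_elim
    case (elim n)
    with attained have "\<rho> / real n \<in> G ` {a..}"
      by auto
    then show ?case
      using the_inv_into_into[OF inj _ order.refl] f_the_inv_into_f[OF inj] by auto
  qed
qed

section \<open>A crude strong law for nonnegative i.i.d. sequences\<close>

lemma sum_pow2_less_le:
  fixes x :: real
  assumes "0 \<le> x"
  shows "(\<Sum>j<J. if 2^j < x then 2^j else 0) \<le> (if 1 < x then 2 * x - 1 else 0)"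
  using assms
proof (induction J arbitrary: x)
  case 0
  then show ?case by simp
next
  case (Suc J)
  have "(\<Sum>j<J. if 2^Suc j < x then 2^Suc j else 0 :: real)
      = 2 * (\<Sum>j<J. if 2^j < x/2 then 2^j else 0)"
    unfolding sum_distrib_left by (rule sum.cong) (auto simp: field_simps)
  with Suc.IH[of "x/2"] Suc.prems show ?case
    unfolding sum.lessThan_Suc_shift by (auto split: if_splits)
qed

lemma sum_square_div_pow2_ge_le:
  fixes x :: real
  assumes "0 \<le> x"
  shows "(\<Sum>j<J. if x \<le> 2^j then x\<^sup>2 / 2^j else 0) \<le> 2 * x * min 1 x"
  using assms
proof (induction J arbitrary: x)
  case 0
  then show ?case by simp
next
  case (Suc J)
  have "(\<Sum>j<J. if x \<le> 2^Suc j then x\<^sup>2 / 2^Suc j else 0 :: real)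
      = 2 * (\<Sum>j<J. if x/2 \<le> 2^j then (x/2)\<^sup>2 / 2^j else 0)"
    unfolding sum_distrib_left by (rule sum.cong) (auto simp: field_simps power2_eq_square)
  moreover have "x \<le> 2 \<Longrightarrow> x * x \<le> 2 * x"
    using Suc.prems by (intro mult_right_mono) auto
  ultimately show ?case
    using Suc.IH[of "x/2"] Suc.prems unfolding sum.lessThan_Suc_shift
    by (auto split: if_splits simp: min_def power2_eq_square)
qed

definition trunc :: "real \<Rightarrow> real \<Rightarrow> real" where
  "trunc N t = (if 0 \<le> t \<and> t \<le> N then t else 0)"

lemma trunc_measurable [measurable]: "trunc N \<in> borel_measurable borel"
  unfolding trunc_def by measurable

lemma abs_trunc_le: "\<bar>trunc N t\<bar> \<le> \<bar>N\<bar>"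
  by (simp add: trunc_def)

definition dyadic_weight :: "nat \<Rightarrow> real \<Rightarrow> real" where
  "dyadic_weight j t = (if 2^j < t then 2^j else 0) + (trunc (2^j) t)\<^sup>2 / 2^j"

lemma sum_dyadic_weight_le:
  assumes "0 \<le> t"
  shows "(\<Sum>j<J. dyadic_weight j t) \<le> 4 * t"
proof -
  have "(\<Sum>j<J. dyadic_weight j t)
      = (\<Sum>j<J. if 2^j < t then 2^j else 0) + (\<Sum>j<J. if t \<le> 2^j then t\<^sup>2 / 2^j else 0)"
    unfolding sum.distrib[symmetric] using assms
    by (intro sum.cong) (auto simp: dyadic_weight_def trunc_def)
  also have "\<dots> \<le> 2 * t + 2 * t"
  proof (rule add_mono)
    show "(\<Sum>j<J. if 2^j < t then 2^j else 0) \<le> 2 * t"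
      using sum_pow2_less_le[OF assms, of J] assms by (auto split: if_splits)
    have "2 * t * min 1 t \<le> 2 * t"
      using assms by (simp add: mult_left_le)
    then show "(\<Sum>j<J. if t \<le> 2^j then t\<^sup>2 / 2^j else 0) \<le> 2 * t"
      using sum_square_div_pow2_ge_le[OF assms, of J] by linarith
  qed
  finally show ?thesis by simp
qed

lemma integral_comp_eq_if_distr_eq:
  fixes g :: "'b \<Rightarrow> 'c::{banach, second_countable_topology}"
  assumes "X \<in> measurable M N" "Y \<in> measurable M N" "distr M N X = distr M N Y"
    and "g \<in> borel_measurable N"
  shows "(\<integral>\<omega>. g (X \<omega>) \<partial>M) = (\<integral>\<omega>. g (Y \<omega>) \<partial>M)"
  using integral_distr[of X M N g] integral_distr[of Y M N g] assms by simp

lemma measure_vimage_eq_if_distr_eq: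
  assumes "X \<in> measurable M N" "Y \<in> measurable M N" "distr M N X = distr M N Y"
    and "A \<in> sets N"
  shows "measure M (X -` A \<inter> space M) = measure M (Y -` A \<inter> space M)"
  using measure_distr[of X M N A] measure_distr[of Y M N A] assms by simp

lemma (in prob_space) variance_sum_indep:
  fixes X :: "'i \<Rightarrow> 'a \<Rightarrow> real"
  assumes indep: "indep_vars (\<lambda>_. borel) X J" and "finite J"
    and square_integrable: "\<And>i. i \<in> J \<Longrightarrow> integrable M (\<lambda>\<omega>. (X i \<omega>)\<^sup>2)"
  shows "variance (\<lambda>\<omega>. \<Sum>i\<in>J. X i \<omega>) = (\<Sum>i\<in>J. variance (X i))"
proof -
  have measurable: "X i \<in> borel_measurable M" if "i \<in> J" for i
    using indep that unfolding indep_vars_def2 by blast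
  have integrable: "integrable M (X i)" if "i \<in> J" for i
    using that by (intro square_integrable_imp_integrable[OF measurable square_integrable])
  define W where "W i = (\<lambda>\<omega>. X i \<omega> - expectation (X i))" for i
  have W_indep: "indep_vars (\<lambda>_. borel) W J"
    unfolding W_def by (rule indep_vars_compose2[OF indep]) simp
  have W_integrable: "integrable M (W i)" if "i \<in> J" for i
    using integrable[OF that] by (simp add: W_def)
  have W_mean: "expectation (W i) = 0" if "i \<in> J" for i
    using integrable[OF that] by (simp add: W_def prob_space)
  have W_square: "(W i \<omega>)\<^sup>2 = (X i \<omega>)\<^sup>2 - 2 * expectation (X i) * X i \<omega> + (expectation (X i))\<^sup>2"
    for i \<omega> unfolding W_def by (simp add: power2_diff)
  have W_product_integrable: "integrable M (\<lambda>\<omega>. W a \<omega> * W b \<omega>)" if "a \<in> J" "b \<in> J" for a b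
  proof (cases "a = b")
    case True
    then show ?thesis
      using that integrable square_integrable by (simp add: W_square flip: power2_eq_square)
  next
    case False
    have "integrable M (\<lambda>\<omega>. \<Prod>i\<in>{a, b}. W i \<omega>)"
      using that W_integrable by (intro indep_vars_integrable indep_vars_subset[OF W_indep]) auto
    with False show ?thesis by simp
  qed
  have W_orthogonal: "expectation (\<lambda>\<omega>. W a \<omega> * W b \<omega>) = 0" if "a \<in> J" "b \<in> J" "a \<noteq> b" for a b
  proof -
    have "expectation (\<lambda>\<omega>. \<Prod>i\<in>{a, b}. W i \<omega>) = (\<Prod>i\<in>{a, b}. expectation (W i))"
      using that W_integrable by (intro indep_vars_lebesgue_integral indep_vars_subset[OF W_indep]) auto
    with that W_mean show ?thesis by simp
  qed
  have centered: "(\<Sum>i\<in>J. X i \<omega>) - expectation (\<lambda>\<omega>. \<Sum>i\<in>J. X i \<omega>) = (\<Sum>i\<in>J. W i \<omega>)" for \<omega>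
    using integrable by (simp add: W_def sum_subtractf)
  have "variance (\<lambda>\<omega>. \<Sum>i\<in>J. X i \<omega>) = expectation (\<lambda>\<omega>. \<Sum>a\<in>J. \<Sum>b\<in>J. W a \<omega> * W b \<omega>)"
    unfolding centered power2_eq_square sum_product ..
  also have "\<dots> = (\<Sum>a\<in>J. \<Sum>b\<in>J. expectation (\<lambda>\<omega>. W a \<omega> * W b \<omega>))"
    using W_product_integrable by (simp add: Bochner_Integration.integrable_sum)
  also have "\<dots> = (\<Sum>a\<in>J. expectation (\<lambda>\<omega>. W a \<omega> * W a \<omega>))"
    using \<open>finite J\<close> W_orthogonal by (intro sum.cong refl) (auto simp: sum.remove intro!: sum.neutral)
  also have "\<dots> = (\<Sum>i\<in>J. variance (X i))"
    by (simp add: W_def power2_eq_square)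
  finally show ?thesis .
qed

(*
  On the dyadic block {1..2^j} the partial sum coincides with block_sum j, the sum truncated at
  2^j, unless some entry exceeds 2^j (large_entry j); and block_sum j stays within 2^j of its mean
  outside large_deviation j, whose probability Chebyshev bounds through the variance. Both
  probabilities together are at most E (dyadic_weight j (X 0)), whose sum over j is at most 4 E X 0,
  so by Borel-Cantelli almost every \<omega> lies in only finitely many bad blocks; an n between 2^(j-1)
  and 2^j then inherits the bound 2^j (E X 0 + 1) of its block.
*)
locale nonneg_iid = prob_space +
  fixes X :: "int \<Rightarrow> 'a \<Rightarrow> real"
  assumes measurable_X [measurable]: "\<And>x. X x \<in> borel_measurable M"
    and indep_X: "indep_vars (\<lambda>_. borel) X UNIV"
    and distr_X: "\<And>x. distr M borel (X x) = distr M borel (X 0)"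
    and nonneg_X: "\<And>x \<omega>. \<omega> \<in> space M \<Longrightarrow> 0 \<le> X x \<omega>"
    and integrable_X: "integrable M (X 0)"
begin

lemma expectation_comp_X:
  "g \<in> borel_measurable borel \<Longrightarrow> expectation (\<lambda>\<omega>. g (X x \<omega>)) = expectation (\<lambda>\<omega>. (g (X 0 \<omega>) :: real))"
  by (rule integral_comp_eq_if_distr_eq[OF measurable_X measurable_X distr_X])

lemma integrable_trunc: "integrable M (\<lambda>\<omega>. trunc N (X x \<omega>))"
  by (rule integrable_const_bound[where B="\<bar>N\<bar>"]) (simp add: abs_trunc_le, measurable)

lemma integrable_trunc_square: "integrable M (\<lambda>\<omega>. (trunc N (X x \<omega>))\<^sup>2)"
  by (rule integrable_const_bound[where B="N\<^sup>2"])
    (simp add: abs_le_square_iff[symmetric] abs_trunc_le, measurable)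

lemma integrable_large_value: "integrable M (\<lambda>\<omega>. if 2^j < X 0 \<omega> then (2::real)^j else 0)"
  by (rule integrable_const_bound[where B="2^j"]) (simp, measurable)

lemma integrable_dyadic_weight: "integrable M (\<lambda>\<omega>. dyadic_weight j (X 0 \<omega>))"
  using integrable_large_value integrable_trunc_square by (simp add: dyadic_weight_def)

definition block_sum :: "nat \<Rightarrow> 'a \<Rightarrow> real" where
  "block_sum j \<omega> = (\<Sum>x\<in>{1..2^j}. trunc (2^j) (X (int x) \<omega>))"

definition large_entry :: "nat \<Rightarrow> 'a set" where
  "large_entry j = {\<omega>\<in>space M. \<exists>x\<in>{1..2^j}. 2^j < X (int x) \<omega>}"

definition large_deviation :: "nat \<Rightarrow> 'a set" where
  "large_deviation j = {\<omega>\<in>space M. 2^j \<le> \<bar>block_sum j \<omega> - expectation (block_sum j)\<bar>}"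

definition bad_block :: "nat \<Rightarrow> 'a set" where
  "bad_block j = large_entry j \<union> large_deviation j"

lemma block_sum_measurable [measurable]: "block_sum j \<in> borel_measurable M"
  unfolding block_sum_def by measurable

lemma large_entry_sets [measurable]: "large_entry j \<in> sets M"
  unfolding large_entry_def by measurable

lemma large_deviation_sets [measurable]: "large_deviation j \<in> sets M"
  unfolding large_deviation_def by measurable

lemma bad_block_sets [measurable]: "bad_block j \<in> sets M"
  unfolding bad_block_def by measurable

lemma prob_large_entry_le:
  "prob (large_entry j) \<le> expectation (\<lambda>\<omega>. if 2^j < X 0 \<omega> then 2^j else 0)"
proof -
  have "prob (large_entry j) = prob (\<Union>x\<in>{1..2^j}. X (int x) -` {2^j<..} \<inter> space M)"
    unfolding large_entry_def by (rule arg_cong[where f=prob]) auto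
  also have "\<dots> \<le> (\<Sum>x\<in>{1..2^j}. prob (X (int x) -` {2^j<..} \<inter> space M))"
    by (rule measure_UNION_le) auto
  also have "\<dots> = (\<Sum>x\<in>{1..2^j::nat}. prob (X 0 -` {2^j<..} \<inter> space M))"
    by (intro sum.cong refl measure_vimage_eq_if_distr_eq[OF measurable_X measurable_X distr_X]) simp
  also have "\<dots> = expectation (\<lambda>\<omega>. 2^j * indicator (X 0 -` {2^j<..} \<inter> space M) \<omega>)"
    by simp
  also have "\<dots> = expectation (\<lambda>\<omega>. if 2^j < X 0 \<omega> then 2^j else 0)"
    by (rule Bochner_Integration.integral_cong) (auto simp: indicator_def)
  finally show ?thesis .
qed

lemma expectation_block_sum_le: "expectation (block_sum j) \<le> 2^j * expectation (X 0)"
proof -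
  have "expectation (block_sum j) = (\<Sum>x\<in>{1..2^j}. expectation (\<lambda>\<omega>. trunc (2^j) (X (int x) \<omega>)))"
    unfolding block_sum_def[abs_def] using integrable_trunc by simp
  also have "\<dots> = (\<Sum>x\<in>{1..2^j::nat}. expectation (\<lambda>\<omega>. trunc (2^j) (X 0 \<omega>)))"
    by (intro sum.cong refl expectation_comp_X) simp
  also have "\<dots> = 2^j * expectation (\<lambda>\<omega>. trunc (2^j) (X 0 \<omega>))"
    by simp
  also have "\<dots> \<le> 2^j * expectation (X 0)"
    using integrable_trunc integrable_X nonneg_X
    by (intro mult_left_mono integral_mono) (auto simp: trunc_def)
  finally show ?thesis .
qed

lemma variance_block_sum_le:
  "variance (block_sum j) \<le> 2^j * expectation (\<lambda>\<omega>. (trunc (2^j) (X 0 \<omega>))\<^sup>2)"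
proof -
  define Y where "Y x = (\<lambda>\<omega>. trunc (2^j) (X x \<omega>))" for x
  have "block_sum j = (\<lambda>\<omega>. \<Sum>x\<in>int ` {1..2^j}. Y x \<omega>)"
    by (simp add: block_sum_def Y_def sum.reindex fun_eq_iff)
  then have "variance (block_sum j) = variance (\<lambda>\<omega>. \<Sum>x\<in>int ` {1..2^j}. Y x \<omega>)"
    by simp
  also have "\<dots> = (\<Sum>x\<in>int ` {1..2^j}. variance (Y x))"
    unfolding Y_def using integrable_trunc_square
    by (intro variance_sum_indep indep_vars_subset[OF indep_vars_compose2[OF indep_X]]) auto
  also have "\<dots> \<le> (\<Sum>x\<in>int ` {1..2^j}. expectation (\<lambda>\<omega>. (Y x \<omega>)\<^sup>2))"
    unfolding Y_def using integrable_trunc integrable_trunc_square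
    by (intro sum_mono) (simp add: variance_eq)
  also have "\<dots> = (\<Sum>x\<in>int ` {1..2^j}. expectation (\<lambda>\<omega>. (trunc (2^j) (X 0 \<omega>))\<^sup>2))"
    unfolding Y_def by (intro sum.cong refl expectation_comp_X) simp
  also have "\<dots> = 2^j * expectation (\<lambda>\<omega>. (trunc (2^j) (X 0 \<omega>))\<^sup>2)"
    by (simp add: card_image)
  finally show ?thesis .
qed

lemma prob_large_deviation_le:
  "prob (large_deviation j) \<le> expectation (\<lambda>\<omega>. (trunc (2^j) (X 0 \<omega>))\<^sup>2) / 2^j"
proof -
  have "\<bar>block_sum j \<omega>\<bar> \<le> 2^j * 2^j" for \<omega>
  proof -
    have "\<bar>block_sum j \<omega>\<bar> \<le> (\<Sum>x\<in>{1..2^j::nat}. \<bar>trunc (2^j) (X (int x) \<omega>)\<bar>)"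
      unfolding block_sum_def by (rule sum_abs)
    also have "\<dots> \<le> (\<Sum>x\<in>{1..2^j::nat}. 2^j)"
      using abs_trunc_le[of "2^j"] by (intro sum_mono) simp
    finally show ?thesis by simp
  qed
  then have "integrable M (\<lambda>\<omega>. (block_sum j \<omega>)\<^sup>2)"
    by (intro integrable_const_bound[where B="(2^j * 2^j)\<^sup>2"])
      (simp add: abs_le_square_iff[symmetric], measurable)
  then have "prob (large_deviation j) \<le> variance (block_sum j) / (2^j)\<^sup>2"
    unfolding large_deviation_def by (intro Chebyshev_inequality) auto
  also have "\<dots> \<le> 2^j * expectation (\<lambda>\<omega>. (trunc (2^j) (X 0 \<omega>))\<^sup>2) / (2^j)\<^sup>2"
    by (intro divide_right_mono variance_block_sum_le) simp
  also have "\<dots> = expectation (\<lambda>\<omega>. (trunc (2^j) (X 0 \<omega>))\<^sup>2) / 2^j"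
    by (simp add: power2_eq_square)
  finally show ?thesis .
qed

lemma prob_bad_block_le: "prob (bad_block j) \<le> expectation (\<lambda>\<omega>. dyadic_weight j (X 0 \<omega>))"
proof -
  have "prob (bad_block j) \<le> prob (large_entry j) + prob (large_deviation j)"
    unfolding bad_block_def by (rule measure_Un_le) auto
  also have "\<dots> \<le> expectation (\<lambda>\<omega>. if 2^j < X 0 \<omega> then 2^j else 0)
      + expectation (\<lambda>\<omega>. (trunc (2^j) (X 0 \<omega>))\<^sup>2) / 2^j"
    by (intro add_mono prob_large_entry_le prob_large_deviation_le)
  also have "\<dots> = expectation (\<lambda>\<omega>. dyadic_weight j (X 0 \<omega>))"
    using integrable_large_value integrable_trunc_square by (simp add: dyadic_weight_def)
  finally show ?thesis .
qed

lemma summable_prob_bad_block: "summable (\<lambda>j. prob (bad_block j))"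
proof (rule summableI_nonneg_bounded)
  fix J
  have "(\<Sum>j<J. prob (bad_block j)) \<le> (\<Sum>j<J. expectation (\<lambda>\<omega>. dyadic_weight j (X 0 \<omega>)))"
    by (intro sum_mono prob_bad_block_le)
  also have "\<dots> = expectation (\<lambda>\<omega>. \<Sum>j<J. dyadic_weight j (X 0 \<omega>))"
    using integrable_dyadic_weight by simp
  also have "\<dots> \<le> expectation (\<lambda>\<omega>. 4 * X 0 \<omega>)"
    using integrable_dyadic_weight integrable_X nonneg_X
    by (intro integral_mono) (auto intro: sum_dyadic_weight_le)
  finally show "(\<Sum>j<J. prob (bad_block j)) \<le> 4 * expectation (X 0)"
    by simp
qed simp

lemma sum_le_if_good_block:
  assumes "\<omega> \<in> space M - bad_block j" "n \<le> 2^j"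
  shows "(\<Sum>x=1..n. X (int x) \<omega>) \<le> 2^j * (expectation (X 0) + 1)"
proof -
  have "(\<Sum>x=1..n. X (int x) \<omega>) \<le> (\<Sum>x=1..2^j. X (int x) \<omega>)"
    using assms nonneg_X by (intro sum_mono2) auto
  also have "\<dots> = block_sum j \<omega>"
    using assms nonneg_X unfolding block_sum_def bad_block_def large_entry_def
    by (intro sum.cong) (auto simp: trunc_def not_less)
  also have "\<dots> < expectation (block_sum j) + 2^j"
    using assms unfolding bad_block_def large_deviation_def by auto
  also have "\<dots> \<le> 2^j * (expectation (X 0) + 1)"
    using expectation_block_sum_le[of j] by (simp add: algebra_simps)
  finally show ?thesis by simp
qed

theorem AE_eventually_sum_le_linear:
  "AE \<omega> in M. \<forall>\<^sub>F n in sequentially.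
     (\<Sum>x=1..n. X (int x) \<omega>) \<le> 2 * (expectation (X 0) + 1) * real n"
proof -
  have mean_nonneg: "0 \<le> expectation (X 0)"
    using nonneg_X by (intro integral_nonneg_AE) auto
  have "AE \<omega> in M. \<forall>\<^sub>F j in sequentially. \<omega> \<in> space M - bad_block j"
    using summable_prob_bad_block by (intro borel_cantelli_AE1) (auto simp: emeasure_eq_measure)
  then show ?thesis
  proof eventually_elim
    fix \<omega> assume "\<forall>\<^sub>F j in sequentially. \<omega> \<in> space M - bad_block j"
    then obtain J where good: "\<And>j. J \<le> j \<Longrightarrow> \<omega> \<in> space M - bad_block j"
      by (auto simp: eventually_sequentially)
    show "\<forall>\<^sub>F n in sequentially. (\<Sum>x=1..n. X (int x) \<omega>) \<le> 2 * (expectation (X 0) + 1) * real n"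
    proof (rule eventually_sequentiallyI)
      fix n :: nat assume n: "2^J \<le> n"
      then have "1 \<le> n"
        by (meson order.trans one_le_numeral one_le_power)
      then obtain k where k: "2^k \<le> n" "n < 2^(k+1)"
        using ex_power_ivl1[of 2 n] by auto
      have "(2::nat)^J < 2^(k+1)"
        using n k by linarith
      then have "J \<le> k + 1"
        using power_less_imp_less_exp[of "2::nat" J "k+1"] by simp
      then have "(\<Sum>x=1..n. X (int x) \<omega>) \<le> 2^(k+1) * (expectation (X 0) + 1)"
        using good k by (intro sum_le_if_good_block) auto
      also have "\<dots> \<le> 2 * real n * (expectation (X 0) + 1)"
        using k(1) mean_nonneg by (intro mult_right_mono) (simp_all flip: of_nat_le_iff)
      finally show "(\<Sum>x=1..n. X (int x) \<omega>) \<le> 2 * (expectation (X 0) + 1) * real n"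
        by (simp add: algebra_simps)
    qed
  qed
qed

end

lemma (in prob_space) nonneg_iid_comp:
  fixes \<xi> :: "int \<Rightarrow> 'a \<Rightarrow> 'b::topological_space" and h :: "'b \<Rightarrow> real"
  assumes [measurable]: "\<And>x. \<xi> x \<in> borel_measurable M"
    and indep: "indep_vars (\<lambda>_. borel) \<xi> UNIV"
    and ident: "\<And>x. distr M borel (\<xi> x) = distr M borel (\<xi> 0)"
    and [measurable]: "h \<in> borel_measurable borel"
    and "\<And>t. 0 \<le> h t" "integrable M (\<lambda>\<omega>. h (\<xi> 0 \<omega>))"
  shows "nonneg_iid M (\<lambda>x \<omega>. h (\<xi> x \<omega>))"
proof
  show "indep_vars (\<lambda>_. borel) (\<lambda>x \<omega>. h (\<xi> x \<omega>)) UNIV"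
    by (rule indep_vars_compose2[OF indep]) simp
  show "distr M borel (\<lambda>\<omega>. h (\<xi> x \<omega>)) = distr M borel (\<lambda>\<omega>. h (\<xi> 0 \<omega>))" for x
    using distr_distr[of h borel borel "\<xi> x" M] distr_distr[of h borel borel "\<xi> 0" M] ident[of x]
    by (simp add: comp_def)
qed (use assms in auto)

lemma (in prob_space) nonneg_iid_reciprocal_shifted_log:
  fixes \<xi> :: "int \<Rightarrow> 'a \<Rightarrow> real" and G :: "real \<Rightarrow> real"
  assumes rv [measurable]: "\<And>x. \<xi> x \<in> borel_measurable M"
    and indep: "indep_vars (\<lambda>_. borel) \<xi> UNIV"
    and ident: "\<And>x. distr M borel (\<xi> x) = distr M borel (\<xi> 0)"
    and pos: "\<And>l. a \<le> l \<Longrightarrow> 0 < G l" and "0 \<le> a"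
    and mono: "mono_on {a..} (\<lambda>l. 1 / G l)" and conc: "concave_on {a..} (\<lambda>l. 1 / G l)"
    and mom: "integrable M (\<lambda>\<omega>. 1 / G (ln (max (- \<xi> 0 \<omega>) 1)))"
  shows "nonneg_iid M (\<lambda>x \<omega>. 1 / G (a + ln (max (- \<xi> x \<omega>) 1)))"
proof -
  \<comment> \<open>The outer max only makes h visibly measurable, 1 / G being monotone on {a..} alone.\<close>
  define h where "h t = 1 / G (max a (a + ln (max (- t) 1)))" for t
  have [measurable]: "(\<lambda>y. 1 / G (max a y)) \<in> borel_measurable borel"
    using mono by (intro borel_measurable_mono) (auto simp: mono_def intro: mono_onD)
  have h_measurable [measurable]: "h \<in> borel_measurable borel"
    unfolding h_def by measurable
  moreover have h_nonneg: "0 \<le> h t" for t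
    using pos[of "a + ln (max (- t) 1)"] by (simp add: h_def)
  moreover have "integrable M (\<lambda>\<omega>. h (\<xi> 0 \<omega>))"
  proof (rule Bochner_Integration.integrable_bound)
    show "integrable M (\<lambda>\<omega>. 1 / G (a + a) + \<bar>1 / G (ln (max (- \<xi> 0 \<omega>) 1))\<bar>)"
      by (intro Bochner_Integration.integrable_add integrable_abs mom) simp
    show "AE \<omega> in M. norm (h (\<xi> 0 \<omega>)) \<le> norm (1 / G (a + a) + \<bar>1 / G (ln (max (- \<xi> 0 \<omega>) 1))\<bar>)"
    proof (rule AE_I2)
      fix \<omega>
      define y where "y = ln (max (- \<xi> 0 \<omega>) 1)"
      have "norm (h (\<xi> 0 \<omega>)) = 1 / G (a + y)"
        using pos[of "a + y"] by (simp add: h_def y_def)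
      also have "\<dots> \<le> 1 / G (a + a) + \<bar>1 / G y\<bar>"
        using pos[of a] \<open>0 \<le> a\<close> by (intro concave_on_shift_le[OF conc mono]) (auto simp: y_def)
      also have "\<dots> = norm (1 / G (a + a) + \<bar>1 / G y\<bar>)"
        using pos[of "a + a"] \<open>0 \<le> a\<close> by simp
      finally show "norm (h (\<xi> 0 \<omega>)) \<le> norm (1 / G (a + a) + \<bar>1 / G (ln (max (- \<xi> 0 \<omega>) 1))\<bar>)"
        by (simp add: y_def)
    qed
  qed measurable
  ultimately have "nonneg_iid M (\<lambda>x \<omega>. h (\<xi> x \<omega>))"
    by (intro nonneg_iid_comp[OF rv indep ident])
  then show ?thesis
    by (simp add: h_def)
qed

theorem lemma3p4:
  fixes M :: "'a measure" and \<xi> :: "int \<Rightarrow> 'a \<Rightarrow> real"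
    and G :: "real \<Rightarrow> real" and \<eta> x0 :: real
  assumes "prob_space M"
    and rv: "\<And>x. \<xi> x \<in> borel_measurable M"
    and indep: "prob_space.indep_vars M (\<lambda>_. borel) \<xi> UNIV"
    and ident: "\<And>x. distr M borel (\<xi> x) = distr M borel (\<xi> 0)"
    and nonpos: "\<And>x \<omega>. \<omega> \<in> space M \<Longrightarrow> \<xi> x \<omega> \<le> 0"
    and eta: "0 < \<eta>" "\<eta> < 1"
    and Gpos: "\<And>l. 0 < l \<Longrightarrow> 0 < G l"
    and x0: "0 < x0"
    and incr: "strict_mono_on {x0..} (\<lambda>l. 1 / G l)"
    and conc: "concave_on {x0..} (\<lambda>l. 1 / G l)"
    and Glim: "(G \<longlongrightarrow> 0) at_top"
    and mom: "integrable M (\<lambda>\<omega>. 1 / G (ln (max (- \<xi> 0 \<omega>) 1)))"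
  shows "\<exists>\<rho>>0. AE \<omega> in M.
           limsup (\<lambda>n. ereal ((\<Sum>x=1..n. ln (max (- \<xi> (int x) \<omega>) 1))
                              / the_inv_into {x0..} G (\<rho> / real n))) \<le> 1"
proof -
  \<comment> \<open>\<eta> only indexes G in the paper, and the sign of \<xi> is irrelevant once it is cut off at -1.\<close>
  interpret prob_space M by fact
  define Y where "Y x \<omega> = ln (max (- \<xi> x \<omega>) 1)" for x \<omega>
  have Y_nonneg: "0 \<le> Y x \<omega>" for x \<omega>
    by (simp add: Y_def)
  have pos: "0 < G l" if "x0 \<le> l" for l
    using Gpos x0 that by simp
  interpret Z: nonneg_iid M "\<lambda>x \<omega>. 1 / G (x0 + Y x \<omega>)"
    using nonneg_iid_reciprocal_shifted_log[OF rv indep ident pos _ strict_mono_on_imp_mono_on[OF incr] conc mom] x0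
    by (simp add: Y_def)
  define c where "c = 2 * (expectation (\<lambda>\<omega>. 1 / G (x0 + Y 0 \<omega>)) + 1)"
  have "0 < c"
    using pos Y_nonneg by (simp add: c_def add_nonneg_pos integral_nonneg_AE less_imp_le)
  define L where "L n = the_inv_into {x0..} G (1 / c / real n)" for n
  have level: "\<forall>\<^sub>F n in sequentially. x0 \<le> L n \<and> 1 / G (L n) = c * real n"
    using eventually_the_inv_into_reciprocal[OF pos incr conc Glim, of "1 / c"] \<open>0 < c\<close>
    by (simp add: L_def mult.commute)
  have "AE \<omega> in M. \<forall>\<^sub>F n in sequentially. ereal ((\<Sum>x=1..n. Y (int x) \<omega>) / L n) \<le> 1"
    using Z.AE_eventually_sum_le_linear
  proof eventually_elim
    case (elim \<omega>)
    with level show ?case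
    proof eventually_elim
      case (elim n)
      then have "x0 + (\<Sum>x=1..n. Y (int x) \<omega>) \<le> L n"
        using pos[of x0] Y_nonneg
        by (intro shifted_sum_le_if_concave_sum_le[OF conc incr]) (auto simp: c_def)
      with elim x0 show ?case
        using sum_nonneg[of "{1..n}" "\<lambda>x. Y (int x) \<omega>"] Y_nonneg by simp
    qed
  qed
  with \<open>0 < c\<close> show ?thesis
    by (intro exI[of _ "1 / c"]) (auto elim!: eventually_mono intro: Limsup_bounded simp: Y_def L_def)
qed

end
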